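(* Consider the two-stage robust problem $w^*=\min_{x\in\mathcal X}c_1x+\max_{u\in\mathcal U(x)}\min_{y\in\mathcal Y(x,u)}c_2y$ described in the context, with continuous uncertainty and recourse variables. Let $\mathcal P_\Pi$ and $\mathcal R_\Pi$ be the (finite) sets of extreme points and extreme rays of $\Pi=\{\pi\ge 0: B_2^\intercal\pi\le c_2^\intercal\}$. Then the problem is equivalent to the bilevel linear program $\min c_1x+\eta$ subject to $x\in\mathcal X$; $\eta\ge (d-B_1x)^\intercal\pi+\max_{u\in\mathcal U(x)}(-Eu)^\intercal\pi$ for all $\pi\in\mathcal P_\Pi$; $(d-B_1x)^\intercal\gamma+\max_{v\in\mathcal U(x)}(-Ev)^\intercal\gamma\le 0$ for all $\gamma\in\mathcal R_\Pi$; and in particular its optimal value is $w^*$.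
   Context: $\mathcal X=\{x\in\mathbb Z^{m_x}_+\times\mathbb R^{n_x}_+: Ax\ge b\}$, $\mathcal U(x)=\{u\in\mathbb R^{n_u}_+: F(x)u\le h+Gx\}$ with $F(x)$ a matrix depending on $x$, and $\mathcal Y(x,u)=\{y\in\mathbb R^{n_y}_+: B_2y\ge d-B_1x-Eu\}$. The optimal value of an infeasible minimization (maximization) problem is $+\infty$ ($-\infty$). Standing assumptions: (A1) $\mathcal U(x)\neq\emptyset$ for all $x\in\mathcal X$; (A2) $\mathcal U(x)$ is bounded for all $x\in\mathcal X$; (A3) $\min\{c_1x+c_2y: x\in\mathcal X,u\in\mathcal U(x),y\in\mathcal Y(x,u)\}$ has a finite optimal value. Two formulations are called equivalent if they have the same optimal value and any optimal first-stage solution of one is optimal for the other, and vice versa. *)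

theory Defs
  imports "HOL-Analysis.Analysis"
begin

text \<open>Vectors are type-indexed: x :: real^'x (first stage, integer coordinates indexed by I),
  u :: real^'u, y :: real^'y; the order on vectors is componentwise.
  Row vectors c1, c2 are represented as vectors, c1 x written c1 \<bullet> x.\<close>

definition first_stage_set ::
  "'x::finite set \<Rightarrow> real^'x^'a::finite \<Rightarrow> real^'a \<Rightarrow> (real^'x) set" where
  "first_stage_set I A b =
     {x. (\<forall>i\<in>I. x $ i \<in> \<int>) \<and> 0 \<le> x \<and> b \<le> A *v x}"

definition unc_set ::
  "(real^'x::finite \<Rightarrow> real^'u::finite^'r::finite) \<Rightarrow> real^'r \<Rightarrow> real^'x^'r
     \<Rightarrow> real^'x \<Rightarrow> (real^'u) set" where
  "unc_set F h G x = {u. 0 \<le> u \<and> F x *v u \<le> h + G *v x}"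

definition rec_set ::
  "real^'y::finite^'m::finite \<Rightarrow> real^'m \<Rightarrow> real^'x::finite^'m \<Rightarrow> real^'u::finite^'m
     \<Rightarrow> real^'x \<Rightarrow> real^'u \<Rightarrow> (real^'y) set" where
  "rec_set B2 d B1 E x u = {y. 0 \<le> y \<and> d - B1 *v x - E *v u \<le> B2 *v y}"

definition dual_poly :: "real^'y::finite^'m::finite \<Rightarrow> real^'y \<Rightarrow> (real^'m) set" where
  "dual_poly B2 c2 = {\<pi>. 0 \<le> \<pi> \<and> transpose B2 *v \<pi> \<le> c2}"

definition dual_rec_cone :: "real^'y::finite^'m::finite \<Rightarrow> (real^'m) set" where
  "dual_rec_cone B2 = {\<gamma>. 0 \<le> \<gamma> \<and> transpose B2 *v \<gamma> \<le> 0}"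

text \<open>All (positive multiples of) extreme ray directions are included; the ray constraints
  are positively homogeneous in \<gamma>, so this is the same as using one representative per ray.\<close>

definition extreme_points_Pi :: "real^'y::finite^'m::finite \<Rightarrow> real^'y \<Rightarrow> (real^'m) set" where
  "extreme_points_Pi B2 c2 = {\<pi>. \<pi> extreme_point_of (dual_poly B2 c2)}"

definition extreme_rays_Pi :: "real^'y::finite^'m::finite \<Rightarrow> (real^'m) set" where
  "extreme_rays_Pi B2 =
     {\<gamma>. \<gamma> \<noteq> 0 \<and> ((\<lambda>t. t *\<^sub>R \<gamma>) ` {0..}) face_of (dual_rec_cone B2)}"

text \<open>Objective of the original problem for a fixed first stage x (extended reals:
  inf over empty set = +\<infinity>, sup over empty set = -\<infinity>).\<close>

definition orig_obj where
  "orig_obj c1 c2 F h G B1 B2 d E x =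
     ereal (c1 \<bullet> x) +
       (SUP u\<in>unc_set F h G x. INF y\<in>rec_set B2 d B1 E x u. ereal (c2 \<bullet> y))"

definition orig_val where
  "orig_val I A b c1 c2 F h G B1 B2 d E =
     (INF x\<in>first_stage_set I A b. orig_obj c1 c2 F h G B1 B2 d E x)"

definition orig_opt where
  "orig_opt I A b c1 c2 F h G B1 B2 d E x \<longleftrightarrow>
     x \<in> first_stage_set I A b \<and>
     orig_obj c1 c2 F h G B1 B2 d E x < \<infinity> \<and>
     orig_obj c1 c2 F h G B1 B2 d E x = orig_val I A b c1 c2 F h G B1 B2 d E"

definition ref_feas where
  "ref_feas I A b c2 F h G B1 B2 d E x \<eta> \<longleftrightarrow>
     x \<in> first_stage_set I A b \<and>
     (\<forall>\<pi>\<in>extreme_points_Pi B2 c2.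
        ereal ((d - B1 *v x) \<bullet> \<pi>) + (SUP u\<in>unc_set F h G x. ereal ((- (E *v u)) \<bullet> \<pi>))
          \<le> ereal \<eta>) \<and>
     (\<forall>\<gamma>\<in>extreme_rays_Pi B2.
        ereal ((d - B1 *v x) \<bullet> \<gamma>) + (SUP v\<in>unc_set F h G x. ereal ((- (E *v v)) \<bullet> \<gamma>))
          \<le> 0)"

definition ref_val where
  "ref_val I A b c1 c2 F h G B1 B2 d E =
     (INF p\<in>{(x, \<eta>). ref_feas I A b c2 F h G B1 B2 d E x \<eta>}. ereal (c1 \<bullet> fst p + snd p))"

definition ref_opt where
  "ref_opt I A b c1 c2 F h G B1 B2 d E x \<longleftrightarrow>
     (\<exists>\<eta>. ref_feas I A b c2 F h G B1 B2 d E x \<eta> \<and>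
          ereal (c1 \<bullet> x + \<eta>) = ref_val I A b c1 c2 F h G B1 B2 d E)"

definition det_val where
  "det_val I A b c1 c2 F h G B1 B2 d E =
     (INF p\<in>{(x, u, y). x \<in> first_stage_set I A b \<and> u \<in> unc_set F h G x \<and>
                         y \<in> rec_set B2 d B1 E x u}.
        ereal (c1 \<bullet> fst p + c2 \<bullet> snd (snd p)))"

end

theory Submission
  imports Defs
begin

text \<open>For fixed x and u the recourse problem is a linear program whose dual feasible set is
  \<Pi>. By LP duality, its value is at most \<eta> iff (d - B1 x - E u) \<bullet> \<pi> \<le> \<eta> for all \<pi> \<in> \<Pi>
  and (d - B1 x - E u) \<bullet> \<gamma> \<le> 0 for all \<gamma> in the recession cone of \<Pi>. Both families of
  inequalities reduce to extreme points and extreme rays: the cone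
  {(\<pi>, t) \<ge> 0. B2^T \<pi> \<le> t c2} has the compact slice {\<Sum>\<pi> + t = 1}, which is the convex hull
  of its extreme points (Krein-Milman), and these are scaled extreme points of \<Pi> when t > 0 and
  generators of extreme rays when t = 0. Taking the supremum over u, the constraints of the
  bilevel program say exactly that \<eta> bounds the worst-case recourse value
  Q(x) = sup_u min_y c2 y, so the bilevel program is the epigraph form of min c1 x + Q(x).
  Assumptions (A1) and (A3) give Q(x) > -\<infinity>, which is what makes optimal first-stage
  solutions of the two forms coincide.\<close>

section \<open>Extreme points of a cone base\<close>

lemma extreme_point_of_convex_combination:
  assumes "e extreme_point_of K" "p \<in> K" "q \<in> K" "0 < u" "u < 1"
    and "e = (1 - u) *\<^sub>R p + u *\<^sub>R q"
  shows "p = e"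
proof (cases "p = q")
  case True
  then show ?thesis using assms(6) by (simp flip: scaleR_left_distrib)
next
  case False
  then have "e \<in> open_segment p q" using assms(4-6) unfolding in_segment by blast
  with assms(1-3) show ?thesis unfolding extreme_point_of_def by blast
qed

lemma cone_base_extreme_point_summand:
  fixes C :: "'a::real_inner set"
  assumes C: "convex_cone C" and pos: "\<And>z. z \<in> C \<Longrightarrow> z \<noteq> 0 \<Longrightarrow> 0 < z \<bullet> a"
    and e: "e extreme_point_of (C \<inter> {z. z \<bullet> a = 1})"
    and "x \<in> C" "y \<in> C" "x + y = t *\<^sub>R e"
  shows "\<exists>s\<ge>0. x = s *\<^sub>R e"
proof -
  have "e \<bullet> a = 1" using e by (simp add: extreme_point_of_def)
  then have t: "t = x \<bullet> a + y \<bullet> a"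
    using arg_cong[OF \<open>x + y = t *\<^sub>R e\<close>, of "\<lambda>z. z \<bullet> a"] by (simp add: inner_add_left)
  consider "x = 0" | "y = 0" | "x \<noteq> 0" "y \<noteq> 0" by blast
  then show ?thesis
  proof cases
    case 1
    then show ?thesis by auto
  next
    case 2
    have "0 \<le> x \<bullet> a" using pos[OF \<open>x \<in> C\<close>] by (cases "x = 0") auto
    then show ?thesis using 2 t \<open>x + y = t *\<^sub>R e\<close> by auto
  next
    case 3
    define p q where "p = (1 / (x \<bullet> a)) *\<^sub>R x" and "q = (1 / (y \<bullet> a)) *\<^sub>R y"
    have "0 < x \<bullet> a" "0 < y \<bullet> a" using pos 3 \<open>x \<in> C\<close> \<open>y \<in> C\<close> by auto
    have pq: "p \<in> C \<inter> {z. z \<bullet> a = 1}" "q \<in> C \<inter> {z. z \<bullet> a = 1}"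
      using \<open>0 < x \<bullet> a\<close> \<open>0 < y \<bullet> a\<close> \<open>x \<in> C\<close> \<open>y \<in> C\<close> C
      by (auto simp: p_def q_def convex_cone_scaleR)
    have "0 < t" using t \<open>0 < x \<bullet> a\<close> \<open>0 < y \<bullet> a\<close> by simp
    have "(1 - (y \<bullet> a) / t) *\<^sub>R p + ((y \<bullet> a) / t) *\<^sub>R q = (1 / t) *\<^sub>R (x + y)"
    proof -
      have "1 - (y \<bullet> a) / t = (x \<bullet> a) / t" using \<open>0 < t\<close> t by (simp add: field_simps)
      then show ?thesis
        using \<open>0 < x \<bullet> a\<close> \<open>0 < y \<bullet> a\<close> by (simp add: p_def q_def scaleR_add_right)
    qed
    also have "\<dots> = e" using \<open>x + y = t *\<^sub>R e\<close> \<open>0 < t\<close> by simp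
    finally have "e = (1 - (y \<bullet> a) / t) *\<^sub>R p + ((y \<bullet> a) / t) *\<^sub>R q" ..
    with pq have "p = e"
      using \<open>0 < x \<bullet> a\<close> \<open>0 < y \<bullet> a\<close> t by (intro extreme_point_of_convex_combination[OF e]) auto
    then show ?thesis using \<open>0 < x \<bullet> a\<close> by (auto simp: p_def intro!: exI[of _ "x \<bullet> a"])
  qed
qed

lemma cone_inner_nonpos_if_base_extreme_points:
  fixes C :: "'a::euclidean_space set"
  assumes C: "convex_cone C" and pos: "\<And>z. z \<in> C \<Longrightarrow> z \<noteq> 0 \<Longrightarrow> 0 < z \<bullet> a"
    and compact: "compact (C \<inter> {z. z \<bullet> a = 1})"
    and extreme: "\<And>e. e extreme_point_of (C \<inter> {z. z \<bullet> a = 1}) \<Longrightarrow> w \<bullet> e \<le> 0"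
    and "z \<in> C"
  shows "w \<bullet> z \<le> 0"
proof (cases "z = 0")
  case False
  let ?K = "C \<inter> {z. z \<bullet> a = 1}"
  have "{z. z \<bullet> a = 1} = {z. a \<bullet> z = 1}" by (simp add: inner_commute)
  then have "convex ?K" using C by (simp add: convex_cone_def convex_Int convex_hyperplane)
  with compact have "?K = convex hull {e. e extreme_point_of ?K}"
    by (rule Krein_Milman_Minkowski)
  also have "\<dots> \<subseteq> {v. w \<bullet> v \<le> 0}"
    using extreme by (intro hull_minimal) (auto simp: convex_halfspace_le)
  finally have K: "?K \<subseteq> {v. w \<bullet> v \<le> 0}" .
  have "0 < z \<bullet> a" using pos \<open>z \<in> C\<close> False by blast
  then have "(1 / (z \<bullet> a)) *\<^sub>R z \<in> ?K" using \<open>z \<in> C\<close> C by (simp add: convex_cone_scaleR)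
  then have "w \<bullet> ((1 / (z \<bullet> a)) *\<^sub>R z) \<le> 0" using K by blast
  with \<open>0 < z \<bullet> a\<close> show ?thesis by (simp add: divide_le_0_iff)
qed simp

section \<open>Homogenization of the dual polyhedron\<close>

definition dual_homogenization :: "real^'n::finite^'m::finite \<Rightarrow> real^'n \<Rightarrow> ((real^'m) \<times> real) set"
  where "dual_homogenization B c = {(\<pi>, t). 0 \<le> \<pi> \<and> 0 \<le> t \<and> transpose B *v \<pi> \<le> t *\<^sub>R c}"

lemma Pair_one_mem_dual_homogenization [simp]:
  "(\<pi>, 1) \<in> dual_homogenization B c \<longleftrightarrow> \<pi> \<in> dual_poly B c"
  by (simp add: dual_homogenization_def dual_poly_def)

lemma Pair_zero_mem_dual_homogenization [simp]:
  "(\<gamma>, 0) \<in> dual_homogenization B c \<longleftrightarrow> \<gamma> \<in> dual_rec_cone B"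
  by (simp add: dual_homogenization_def dual_rec_cone_def)

lemma convex_cone_dual_homogenization: "convex_cone (dual_homogenization B c)"
  unfolding convex_cone_iff
proof (intro conjI ballI allI impI)
  show "0 \<in> dual_homogenization B c" by (simp add: dual_homogenization_def zero_prod_def)
next
  fix z z' assume "z \<in> dual_homogenization B c" "z' \<in> dual_homogenization B c"
  then show "z + z' \<in> dual_homogenization B c"
    by (auto simp: dual_homogenization_def matrix_vector_right_distrib scaleR_add_left
        simp del: transpose_matrix_vector intro!: add_mono)
next
  fix z and s :: real assume "z \<in> dual_homogenization B c" "0 \<le> s"
  then obtain \<pi> t where "z = (\<pi>, t)" "0 \<le> \<pi>" "0 \<le> t" "transpose B *v \<pi> \<le> t *\<^sub>R c"
    by (auto simp: dual_homogenization_def simp del: transpose_matrix_vector)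
  with \<open>0 \<le> s\<close> show "s *\<^sub>R z \<in> dual_homogenization B c"
    using scaleR_left_mono[of "transpose B *v \<pi>" "t *\<^sub>R c" s]
    by (simp add: dual_homogenization_def matrix_vector_mult_scaleR scaleR_nonneg_nonneg
        del: transpose_matrix_vector)
qed

lemma closed_dual_homogenization: "closed (dual_homogenization B c)"
proof -
  have "dual_homogenization B c =
      {0..} \<inter> (\<lambda>z. snd z *\<^sub>R c - transpose B *v fst z) -` {0..}"
    by (auto simp: dual_homogenization_def zero_prod_def less_eq_prod_def
        simp del: transpose_matrix_vector)
  also have "closed \<dots>"
    by (intro closed_Int closed_vimage closed_eucl_atLeast continuous_intros
        continuous_on_compose2[OF matrix_vector_mult_linear_continuous_on[of UNIV]]) auto
  finally show ?thesis .
qed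

lemma inner_one_eq_sum: "x \<bullet> 1 = (\<Sum>i\<in>UNIV. x $ i)" for x :: "real^'n::finite"
  by (simp add: inner_vec_def)

lemma inner_one_pos:
  fixes x :: "real^'n::finite"
  assumes "0 \<le> x" "x \<noteq> 0"
  shows "0 < x \<bullet> 1"
proof -
  obtain i where "x $ i \<noteq> 0" using assms(2) by (auto simp: vec_eq_iff)
  with assms(1) have "0 < x $ i" by (simp add: less_eq_vec_def order_le_neq_trans)
  with assms(1) show ?thesis
    unfolding inner_one_eq_sum by (intro sum_pos2[where i = i]) (auto simp: less_eq_vec_def)
qed

lemma dual_homogenization_inner_pos:
  assumes "z \<in> dual_homogenization B c" "z \<noteq> 0"
  shows "0 < z \<bullet> (1, 1)"
proof -
  obtain \<pi> t where z: "z = (\<pi>, t)" "0 \<le> \<pi>" "0 \<le> t"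
    using assms(1) by (auto simp: dual_homogenization_def)
  have "0 \<le> \<pi> \<bullet> 1" using z(2) inner_one_pos[of \<pi>] by (cases "\<pi> = 0") auto
  moreover have "0 < \<pi> \<bullet> 1 \<or> 0 < t"
    using assms(2) z inner_one_pos[of \<pi>] by (cases "\<pi> = 0") (auto simp: zero_prod_def)
  ultimately show ?thesis using z by auto
qed

lemma compact_dual_homogenization_slice:
  "compact (dual_homogenization B c \<inter> {z. z \<bullet> (1, 1) = 1})"
proof (rule compact_eq_bounded_closed[THEN iffD2], rule conjI)
  have "norm z \<le> 1" if mem: "z \<in> dual_homogenization B c" and one: "z \<bullet> (1, 1) = 1" for z
  proof -
    obtain \<pi> t where z: "z = (\<pi>, t)" "0 \<le> \<pi>" "0 \<le> t"
      using mem by (auto simp: dual_homogenization_def)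
    have "norm \<pi> \<le> \<pi> \<bullet> 1"
      using norm_le_l1_cart[of \<pi>] z(2) by (simp add: inner_one_eq_sum less_eq_vec_def)
    then show ?thesis using norm_Pair_le[of \<pi> t] z one by simp
  qed
  then show "bounded (dual_homogenization B c \<inter> {z. z \<bullet> (1, 1) = 1})"
    unfolding bounded_iff by blast
  show "closed (dual_homogenization B c \<inter> {z. z \<bullet> (1, 1) = 1})"
    using closed_hyperplane[of "(1, 1)" 1]
    by (intro closed_Int closed_dual_homogenization) (simp add: inner_commute)
qed

lemma dual_slice_extreme_point_summand:
  assumes "e extreme_point_of (dual_homogenization B c \<inter> {z. z \<bullet> (1, 1) = 1})"
    and "x \<in> dual_homogenization B c" "y \<in> dual_homogenization B c" "x + y = t *\<^sub>R e"
  shows "\<exists>s\<ge>0. x = s *\<^sub>R e"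
  by (rule cone_base_extreme_point_summand[OF convex_cone_dual_homogenization _ assms])
    (rule dual_homogenization_inner_pos)

lemma extreme_point_of_dual_poly_if_slice:
  assumes e: "(\<pi>, t) extreme_point_of (dual_homogenization B c \<inter> {z. z \<bullet> (1, 1) = 1})"
    and "0 < t"
  shows "(1 / t) *\<^sub>R \<pi> extreme_point_of dual_poly B c"
proof -
  let ?H = "dual_homogenization B c"
  have "(\<pi>, t) \<in> ?H" using e by (simp add: extreme_point_of_def)
  then have "(1 / t) *\<^sub>R (\<pi>, t) \<in> ?H"
    using \<open>0 < t\<close> by (intro convex_cone_scaleR[OF convex_cone_dual_homogenization]) auto
  then have mem: "(1 / t) *\<^sub>R \<pi> \<in> dual_poly B c" using \<open>0 < t\<close> by simp
  have summand: "p = (1 / t) *\<^sub>R \<pi>"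
    if "p \<in> dual_poly B c" "q \<in> dual_poly B c" "0 < u" "u < 1"
      and comb: "(1 / t) *\<^sub>R \<pi> = (1 - u) *\<^sub>R p + u *\<^sub>R q" for p q u
  proof -
    have "(t * (1 - u)) *\<^sub>R (p, 1) \<in> ?H"
      using that \<open>0 < t\<close> by (intro convex_cone_scaleR[OF convex_cone_dual_homogenization]) auto
    moreover have "(t * u) *\<^sub>R (q, 1) \<in> ?H"
      using that \<open>0 < t\<close> by (intro convex_cone_scaleR[OF convex_cone_dual_homogenization]) auto
    moreover have "(t * (1 - u)) *\<^sub>R (p, 1) + (t * u) *\<^sub>R (q, 1) = 1 *\<^sub>R (\<pi>, t)"
      using arg_cong[OF comb, of "\<lambda>v. t *\<^sub>R v"] \<open>0 < t\<close> by (simp add: algebra_simps)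
    ultimately obtain s where "(t * (1 - u)) *\<^sub>R (p, 1) = s *\<^sub>R (\<pi>, t)"
      using dual_slice_extreme_point_summand[OF e] by blast
    then have "s = 1 - u" "(t * (1 - u)) *\<^sub>R p = s *\<^sub>R \<pi>" using \<open>0 < t\<close> by auto
    then have "(1 - u) *\<^sub>R (t *\<^sub>R p) = (1 - u) *\<^sub>R \<pi>" by (simp add: mult.commute)
    then have "t *\<^sub>R p = \<pi>" using \<open>u < 1\<close> by (simp only: scaleR_cancel_left) simp
    with \<open>0 < t\<close> show ?thesis by auto
  qed
  show ?thesis
    unfolding extreme_point_of_def
  proof (intro conjI mem ballI notI)
    fix p q assume "p \<in> dual_poly B c" "q \<in> dual_poly B c" "(1 / t) *\<^sub>R \<pi> \<in> open_segment p q"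
    then obtain u where "p \<noteq> q" "0 < u" "u < 1" "(1 / t) *\<^sub>R \<pi> = (1 - u) *\<^sub>R p + u *\<^sub>R q"
      unfolding in_segment by blast
    with \<open>p \<in> dual_poly B c\<close> \<open>q \<in> dual_poly B c\<close> show False
      using summand[of p q u] summand[of q p "1 - u"] by (simp add: add.commute)
  qed
qed

lemma dual_rec_cone_summand_on_ray:
  assumes e: "(\<gamma>, 0) extreme_point_of (dual_homogenization B c \<inter> {z. z \<bullet> (1, 1) = 1})"
    and "a \<in> dual_rec_cone B" "b \<in> dual_rec_cone B" "0 < u" "u < 1"
    and comb: "s *\<^sub>R \<gamma> = (1 - u) *\<^sub>R a + u *\<^sub>R b"
  shows "a \<in> (\<lambda>r. r *\<^sub>R \<gamma>) ` {0..}"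
proof -
  have "(1 - u) *\<^sub>R (a, 0) \<in> dual_homogenization B c"
    using assms by (intro convex_cone_scaleR[OF convex_cone_dual_homogenization]) auto
  moreover have "u *\<^sub>R (b, 0) \<in> dual_homogenization B c"
    using assms by (intro convex_cone_scaleR[OF convex_cone_dual_homogenization]) auto
  moreover have "(1 - u) *\<^sub>R (a, 0) + u *\<^sub>R (b, 0) = s *\<^sub>R (\<gamma>, 0::real)" using comb by simp
  ultimately obtain r where "0 \<le> r" "(1 - u) *\<^sub>R (a, 0) = r *\<^sub>R (\<gamma>, 0::real)"
    using dual_slice_extreme_point_summand[OF e] by blast
  then have "(1 - u) *\<^sub>R a = r *\<^sub>R \<gamma>" by simp
  then have "a = (r / (1 - u)) *\<^sub>R \<gamma>" using \<open>u < 1\<close> by (simp add: eq_vector_fraction_iff)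
  with \<open>0 \<le> r\<close> \<open>u < 1\<close> show ?thesis by auto
qed

lemma extreme_ray_if_slice:
  assumes e: "(\<gamma>, 0) extreme_point_of (dual_homogenization B c \<inter> {z. z \<bullet> (1, 1) = 1})"
  shows "\<gamma> \<in> extreme_rays_Pi B"
proof -
  let ?T = "(\<lambda>s. s *\<^sub>R \<gamma>) ` {0..}"
  have "(\<gamma>, 0) \<in> dual_homogenization B c" "\<gamma> \<bullet> 1 = 1"
    using e by (auto simp: extreme_point_of_def)
  then have "\<gamma> \<in> dual_rec_cone B" "\<gamma> \<noteq> 0" by auto
  have "?T \<subseteq> dual_rec_cone B"
  proof
    fix v assume "v \<in> ?T"
    then obtain s where "0 \<le> s" "v = s *\<^sub>R \<gamma>" by auto
    then have "s *\<^sub>R (\<gamma>, 0::real) \<in> dual_homogenization B c"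
      using \<open>(\<gamma>, 0) \<in> dual_homogenization B c\<close>
      by (intro convex_cone_scaleR[OF convex_cone_dual_homogenization])
    then show "v \<in> dual_rec_cone B" using \<open>v = s *\<^sub>R \<gamma>\<close> by simp
  qed
  have "convex ?T"
    by (rule convex_linear_image[OF bounded_linear.linear[OF bounded_linear_scaleR_left]]) simp
  have "a \<in> ?T \<and> b \<in> ?T"
    if ab: "a \<in> dual_rec_cone B" "b \<in> dual_rec_cone B"
      and x: "x \<in> ?T" "x \<in> open_segment a b" for a b x
  proof -
    obtain s u where "0 < u" "u < 1" "s *\<^sub>R \<gamma> = (1 - u) *\<^sub>R a + u *\<^sub>R b"
      using x unfolding in_segment by auto
    then show ?thesis
      using dual_rec_cone_summand_on_ray[OF e ab]
        dual_rec_cone_summand_on_ray[OF e ab(2,1), of "1 - u" s]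
      by (simp add: add.commute)
  qed
  with \<open>?T \<subseteq> dual_rec_cone B\<close> \<open>convex ?T\<close> have "?T face_of dual_rec_cone B"
    unfolding face_of_def by blast
  with \<open>\<gamma> \<noteq> 0\<close> show ?thesis unfolding extreme_rays_Pi_def by blast
qed

lemma homogenized_dual_le_if_extreme_bounds:
  fixes B :: "real^'n::finite^'m::finite"
  assumes points: "\<And>\<pi>. \<pi> \<in> extreme_points_Pi B c \<Longrightarrow> w \<bullet> \<pi> \<le> \<eta>"
    and rays: "\<And>\<gamma>. \<gamma> \<in> extreme_rays_Pi B \<Longrightarrow> w \<bullet> \<gamma> \<le> 0"
    and "z \<in> dual_homogenization B c"
  shows "(w, - \<eta>) \<bullet> z \<le> 0"
proof -
  let ?S = "dual_homogenization B c \<inter> {z. z \<bullet> (1, 1) = 1}"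
  have extreme: "(w, - \<eta>) \<bullet> e \<le> 0" if e: "e extreme_point_of ?S" for e
  proof -
    obtain \<pi> t where "e = (\<pi>, t)" by fastforce
    have "e \<in> dual_homogenization B c" using e by (simp only: extreme_point_of_def) blast
    then have "0 \<le> t" using \<open>e = (\<pi>, t)\<close> by (simp add: dual_homogenization_def)
    show ?thesis
    proof (cases "t = 0")
      case True
      then have "w \<bullet> \<pi> \<le> 0" using e \<open>e = (\<pi>, t)\<close> by (simp add: rays extreme_ray_if_slice)
      then show ?thesis using \<open>e = (\<pi>, t)\<close> True by simp
    next
      case False
      with \<open>0 \<le> t\<close> have "0 < t" by simp
      then have "(1 / t) *\<^sub>R \<pi> \<in> extreme_points_Pi B c"
        using e \<open>e = (\<pi>, t)\<close>
        by (simp add: extreme_points_Pi_def extreme_point_of_dual_poly_if_slice)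
      then have "w \<bullet> ((1 / t) *\<^sub>R \<pi>) \<le> \<eta>" by (rule points)
      with \<open>0 < t\<close> show ?thesis using \<open>e = (\<pi>, t)\<close> by (simp add: field_simps)
    qed
  qed
  show ?thesis
    using convex_cone_dual_homogenization dual_homogenization_inner_pos
      compact_dual_homogenization_slice extreme assms(3)
    by (rule cone_inner_nonpos_if_base_extreme_points)
qed

section \<open>Linear programming duality\<close>

lemma inner_le_inner_nonneg:
  fixes x y z :: "real^'n::finite"
  assumes "x \<le> y" "0 \<le> z"
  shows "x \<bullet> z \<le> y \<bullet> z"
  using assms unfolding inner_vec_def less_eq_vec_def by (auto intro!: sum_mono mult_right_mono)

lemma lp_weak_duality:
  fixes B :: "real^'n::finite^'m::finite"
  assumes "0 \<le> \<pi>" "transpose B *v \<pi> \<le> c" "0 \<le> y" "w \<le> B *v y"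
  shows "w \<bullet> \<pi> \<le> c \<bullet> y"
proof -
  have "w \<bullet> \<pi> \<le> (B *v y) \<bullet> \<pi>" using assms(4,1) by (rule inner_le_inner_nonneg)
  also have "\<dots> = (transpose B *v \<pi>) \<bullet> y"
    by (metis dot_lmul_matrix inner_commute transpose_matrix_vector)
  also have "\<dots> \<le> c \<bullet> y" using assms(2,3) by (rule inner_le_inner_nonneg)
  finally show ?thesis .
qed

lemma finite_cone_separation:
  fixes S :: "'a::euclidean_space set"
  assumes "finite S" "z \<notin> convex_cone hull S"
  obtains a where "a \<bullet> z < 0" "\<And>s. s \<in> S \<Longrightarrow> 0 \<le> a \<bullet> s"
proof -
  obtain a b where sep: "a \<bullet> z < b" "\<And>x. x \<in> convex_cone hull S \<Longrightarrow> b < a \<bullet> x"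
    using separating_hyperplane_closed_point[OF convex_convex_cone_hull
        closed_convex_cone_hull[OF assms(1)] assms(2)] by blast
  have "b < 0" using sep(2)[OF convex_cone_hull_contains_0] by simp
  have "0 \<le> a \<bullet> s" if "s \<in> S" for s
  proof (rule ccontr)
    assume "\<not> 0 \<le> a \<bullet> s"
    then have "(b / (a \<bullet> s)) *\<^sub>R s \<in> convex_cone hull S"
      using \<open>b < 0\<close> \<open>s \<in> S\<close> by (intro convex_cone_hull_mul hull_inc) (auto simp: divide_nonpos_neg)
    from sep(2)[OF this] \<open>\<not> 0 \<le> a \<bullet> s\<close> show False by simp
  qed
  then show thesis using sep(1) \<open>b < 0\<close> by (intro that) auto
qed

lemma convex_cone_lp_attainable_set:
  fixes B :: "real^'n::finite^'m::finite"
  shows "convex_cone {(z, r). \<exists>y. 0 \<le> y \<and> z \<le> B *v y \<and> c \<bullet> y \<le> r}"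
  unfolding convex_cone_iff
proof (intro conjI ballI allI impI)
  show "0 \<in> {(z, r). \<exists>y. 0 \<le> y \<and> z \<le> B *v y \<and> c \<bullet> y \<le> r}"
    by (auto simp: zero_prod_def intro!: exI[of _ 0])
next
  fix p q assume "p \<in> {(z, r). \<exists>y. 0 \<le> y \<and> z \<le> B *v y \<and> c \<bullet> y \<le> r}"
    "q \<in> {(z, r). \<exists>y. 0 \<le> y \<and> z \<le> B *v y \<and> c \<bullet> y \<le> r}"
  then obtain z1 r1 y1 z2 r2 y2 where "p = (z1, r1)" "0 \<le> y1" "z1 \<le> B *v y1" "c \<bullet> y1 \<le> r1"
    "q = (z2, r2)" "0 \<le> y2" "z2 \<le> B *v y2" "c \<bullet> y2 \<le> r2" by auto
  then show "p + q \<in> {(z, r). \<exists>y. 0 \<le> y \<and> z \<le> B *v y \<and> c \<bullet> y \<le> r}"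
    by (auto intro!: exI[of _ "y1 + y2"] add_mono add_nonneg_nonneg
        simp: matrix_vector_right_distrib inner_add_right)
next
  fix p and t :: real assume "p \<in> {(z, r). \<exists>y. 0 \<le> y \<and> z \<le> B *v y \<and> c \<bullet> y \<le> r}" "0 \<le> t"
  then obtain z r y where "p = (z, r)" "0 \<le> y" "z \<le> B *v y" "c \<bullet> y \<le> r" by auto
  with \<open>0 \<le> t\<close> show "t *\<^sub>R p \<in> {(z, r). \<exists>y. 0 \<le> y \<and> z \<le> B *v y \<and> c \<bullet> y \<le> r}"
    by (auto intro!: exI[of _ "t *\<^sub>R y"] scaleR_left_mono mult_left_mono scaleR_nonneg_nonneg
        simp: matrix_vector_mult_scaleR)
qed

lemma transpose_mult_vector_component:
  fixes B :: "real^'n::finite^'m::finite"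
  shows "(transpose B *v \<rho>) $ j = column j B \<bullet> \<rho>"
  by (simp add: matrix_vector_mult_def transpose_def column_def inner_vec_def mult.commute)

lemma exists_primal_le_if_homogenized_dual_le:
  fixes B :: "real^'n::finite^'m::finite"
  assumes dual: "\<And>z. z \<in> dual_homogenization B c \<Longrightarrow> (w, - \<eta>) \<bullet> z \<le> 0"
  obtains y where "0 \<le> y" "w \<le> B *v y" "c \<bullet> y \<le> \<eta>"
proof -
  define Q where "Q = {(z, r). \<exists>y. 0 \<le> y \<and> z \<le> B *v y \<and> c \<bullet> y \<le> r}"
  define S where "S = range (\<lambda>j. (column j B, c $ j)) \<union> range (\<lambda>i. (- axis i 1, 0)) \<union> {(0, 1)}"
  have "(column j B, c $ j) \<in> Q" for j
  proof -
    have "0 \<le> axis j (1::real)" by (simp add: less_eq_vec_def axis_def)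
    then show ?thesis
      unfolding Q_def
      by (auto intro!: exI[of _ "axis j 1"] simp: matrix_vector_mult_basis inner_axis)
  qed
  moreover have "(- axis i 1, 0) \<in> Q" "(0, 1) \<in> Q" for i
    unfolding Q_def by (auto intro!: exI[of _ 0] simp: less_eq_vec_def axis_def)
  ultimately have "S \<subseteq> Q" unfolding S_def by auto
  have "convex_cone Q" unfolding Q_def by (rule convex_cone_lp_attainable_set)
  have "(w, \<eta>) \<in> Q"
  proof (rule ccontr)
    assume "(w, \<eta>) \<notin> Q"
    then have "(w, \<eta>) \<notin> convex_cone hull S"
      using hull_minimal[of S Q convex_cone] \<open>S \<subseteq> Q\<close> \<open>convex_cone Q\<close> by blast
    moreover have "finite S" unfolding S_def by simp
    ultimately obtain p l where sep: "(p, l) \<bullet> (w, \<eta>) < 0" "\<And>s. s \<in> S \<Longrightarrow> 0 \<le> (p, l) \<bullet> s"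
      using finite_cone_separation by (metis surj_pair)
    \<comment> \<open>The generators in S turn the separating functional into a point of the homogenized dual.\<close>
    have "0 \<le> l" using sep(2)[of "(0, 1)"] by (simp add: S_def)
    moreover have "0 \<le> - p"
      using sep(2)[of "(- axis _ 1, 0)"] by (simp add: S_def less_eq_vec_def inner_axis)
    moreover have "(transpose B *v (- p)) $ j \<le> (l *\<^sub>R c) $ j" for j
      using sep(2)[of "(column j B, c $ j)"] unfolding transpose_mult_vector_component
      by (simp add: S_def inner_commute)
    then have "transpose B *v (- p) \<le> l *\<^sub>R c" unfolding less_eq_vec_def by blast
    ultimately have "(- p, l) \<in> dual_homogenization B c"
      by (simp add: dual_homogenization_def del: transpose_matrix_vector)
    from dual[OF this] sep(1) show False by (simp add: inner_commute mult.commute[of \<eta> l])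
  qed
  then show thesis unfolding Q_def using that by blast
qed

lemma lp_value_le_iff_extreme_bounds:
  fixes B :: "real^'n::finite^'m::finite"
  shows "(INF y\<in>{y. 0 \<le> y \<and> w \<le> B *v y}. ereal (c \<bullet> y)) \<le> ereal \<eta> \<longleftrightarrow>
    (\<forall>\<pi>\<in>extreme_points_Pi B c. w \<bullet> \<pi> \<le> \<eta>) \<and> (\<forall>\<gamma>\<in>extreme_rays_Pi B. w \<bullet> \<gamma> \<le> 0)"
    (is "?value \<le> _ \<longleftrightarrow> _")
proof
  assume le: "?value \<le> ereal \<eta>"
  have "w \<bullet> \<pi> \<le> \<eta>" if "\<pi> \<in> extreme_points_Pi B c" for \<pi>
  proof -
    have "0 \<le> \<pi>" "transpose B *v \<pi> \<le> c"
      using that by (auto simp: extreme_points_Pi_def extreme_point_of_def dual_poly_def)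
    then have "ereal (w \<bullet> \<pi>) \<le> ?value" by (auto intro!: INF_greatest lp_weak_duality)
    from order_trans[OF this le] show ?thesis by simp
  qed
  moreover have "w \<bullet> \<gamma> \<le> 0" if "\<gamma> \<in> extreme_rays_Pi B" for \<gamma>
  proof -
    have "\<gamma> \<in> (\<lambda>t. t *\<^sub>R \<gamma>) ` {0..}" by (rule image_eqI[of _ _ 1]) auto
    then have "0 \<le> \<gamma>" "transpose B *v \<gamma> \<le> 0"
      using that by (auto simp: extreme_rays_Pi_def dual_rec_cone_def dest: face_of_imp_subset)
    obtain y where "0 \<le> y" "w \<le> B *v y"
      using le by (cases "{y. 0 \<le> y \<and> w \<le> B *v y} = {}") (auto simp: top_ereal_def)
    from lp_weak_duality[OF \<open>0 \<le> \<gamma>\<close> \<open>transpose B *v \<gamma> \<le> 0\<close> this] show ?thesis by simp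
  qed
  ultimately show "(\<forall>\<pi>\<in>extreme_points_Pi B c. w \<bullet> \<pi> \<le> \<eta>) \<and> (\<forall>\<gamma>\<in>extreme_rays_Pi B. w \<bullet> \<gamma> \<le> 0)"
    by blast
next
  assume "(\<forall>\<pi>\<in>extreme_points_Pi B c. w \<bullet> \<pi> \<le> \<eta>) \<and> (\<forall>\<gamma>\<in>extreme_rays_Pi B. w \<bullet> \<gamma> \<le> 0)"
  then have "(w, - \<eta>) \<bullet> z \<le> 0" if "z \<in> dual_homogenization B c" for z
    using that by (intro homogenized_dual_le_if_extreme_bounds) auto
  then obtain y where "0 \<le> y" "w \<le> B *v y" "c \<bullet> y \<le> \<eta>"
    by (rule exists_primal_le_if_homogenized_dual_le)
  then show "?value \<le> ereal \<eta>" by (intro INF_lower2[of y]) auto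
qed

lemma ereal_add_SUP_le_iff:
  "ereal r + (SUP u\<in>U. ereal (f u)) \<le> ereal \<eta> \<longleftrightarrow> (\<forall>u\<in>U. r + f u \<le> \<eta>)"
proof -
  have shift: "ereal r + S \<le> ereal \<eta> \<longleftrightarrow> S \<le> ereal (\<eta> - r)" for S by (cases S) auto
  show ?thesis unfolding shift by (auto simp: SUP_le_iff algebra_simps)
qed

lemma worst_case_lp_value_le_iff:
  fixes B :: "real^'n::finite^'m::finite"
  shows "(SUP u\<in>U. INF y\<in>{y. 0 \<le> y \<and> a - E *v u \<le> B *v y}. ereal (c \<bullet> y)) \<le> ereal \<eta> \<longleftrightarrow>
    (\<forall>\<pi>\<in>extreme_points_Pi B c.
      ereal (a \<bullet> \<pi>) + (SUP u\<in>U. ereal ((- (E *v u)) \<bullet> \<pi>)) \<le> ereal \<eta>) \<and>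
    (\<forall>\<gamma>\<in>extreme_rays_Pi B.
      ereal (a \<bullet> \<gamma>) + (SUP v\<in>U. ereal ((- (E *v v)) \<bullet> \<gamma>)) \<le> 0)"
  unfolding SUP_le_iff lp_value_le_iff_extreme_bounds zero_ereal_def ereal_add_SUP_le_iff
  by (auto simp: inner_diff_left)

section \<open>The epigraph reformulation\<close>

lemma epigraph_INF_eq:
  fixes f :: "'a \<Rightarrow> real" and V :: "'a \<Rightarrow> ereal"
  assumes "\<And>x. x \<in> X \<Longrightarrow> V x \<noteq> -\<infinity>"
  shows "(INF p\<in>{(x, \<eta>). x \<in> X \<and> V x \<le> ereal \<eta>}. ereal (f (fst p) + snd p)) =
    (INF x\<in>X. ereal (f x) + V x)"
proof (rule antisym)
  show "(INF p\<in>{(x, \<eta>). x \<in> X \<and> V x \<le> ereal \<eta>}. ereal (f (fst p) + snd p)) \<le>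
      (INF x\<in>X. ereal (f x) + V x)"
  proof (rule INF_greatest)
    fix x assume "x \<in> X"
    show "(INF p\<in>{(x, \<eta>). x \<in> X \<and> V x \<le> ereal \<eta>}. ereal (f (fst p) + snd p)) \<le> ereal (f x) + V x"
    proof (cases "V x")
      case (real v)
      with \<open>x \<in> X\<close> show ?thesis by (intro INF_lower2[of "(x, v)"]) auto
    qed (use assms \<open>x \<in> X\<close> in auto)
  qed
next
  show "(INF x\<in>X. ereal (f x) + V x) \<le>
      (INF p\<in>{(x, \<eta>). x \<in> X \<and> V x \<le> ereal \<eta>}. ereal (f (fst p) + snd p))"
  proof (rule INF_greatest, clarify)
    fix x \<eta> assume "x \<in> X" "V x \<le> ereal \<eta>"
    then have "(INF x\<in>X. ereal (f x) + V x) \<le> ereal (f x) + ereal \<eta>"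
      by (intro INF_lower2[of x] add_left_mono)
    then show "(INF x\<in>X. ereal (f x) + V x) \<le> ereal (f (fst (x, \<eta>)) + snd (x, \<eta>))" by simp
  qed
qed

lemma epigraph_argmin_iff:
  fixes f :: "'a \<Rightarrow> real" and V :: "'a \<Rightarrow> ereal"
  assumes "\<And>x. x \<in> X \<Longrightarrow> V x \<noteq> -\<infinity>"
  shows "(x \<in> X \<and> ereal (f x) + V x < \<infinity> \<and> ereal (f x) + V x = (INF z\<in>X. ereal (f z) + V z)) \<longleftrightarrow>
    (\<exists>\<eta>. (x \<in> X \<and> V x \<le> ereal \<eta>) \<and> ereal (f x + \<eta>) = (INF z\<in>X. ereal (f z) + V z))"
proof
  assume opt: "x \<in> X \<and> ereal (f x) + V x < \<infinity> \<and> ereal (f x) + V x = (INF z\<in>X. ereal (f z) + V z)"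
  then obtain v where "V x = ereal v" using assms by (cases "V x") auto
  with opt show "\<exists>\<eta>. (x \<in> X \<and> V x \<le> ereal \<eta>) \<and> ereal (f x + \<eta>) = (INF z\<in>X. ereal (f z) + V z)"
    by (intro exI[of _ v]) auto
next
  assume "\<exists>\<eta>. (x \<in> X \<and> V x \<le> ereal \<eta>) \<and> ereal (f x + \<eta>) = (INF z\<in>X. ereal (f z) + V z)"
  then obtain \<eta> where "x \<in> X" "V x \<le> ereal \<eta>"
    and val: "ereal (f x + \<eta>) = (INF z\<in>X. ereal (f z) + V z)"
    by blast
  have "(INF z\<in>X. ereal (f z) + V z) \<le> ereal (f x) + V x" using \<open>x \<in> X\<close> by (rule INF_lower)
  moreover have "ereal (f x) + V x \<le> ereal (f x + \<eta>)"
    using add_left_mono[OF \<open>V x \<le> ereal \<eta>\<close>, of "ereal (f x)"] by simp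
  ultimately show "x \<in> X \<and> ereal (f x) + V x < \<infinity> \<and> ereal (f x) + V x = (INF z\<in>X. ereal (f z) + V z)"
    using \<open>x \<in> X\<close> val by (auto intro: le_less_trans)
qed

definition worst_case_recourse ::
  "real^'y::finite \<Rightarrow> (real^'x::finite \<Rightarrow> real^'u::finite^'r::finite) \<Rightarrow> real^'r \<Rightarrow> real^'x^'r
     \<Rightarrow> real^'x^'m::finite \<Rightarrow> real^'y^'m \<Rightarrow> real^'m \<Rightarrow> real^'u^'m \<Rightarrow> real^'x \<Rightarrow> ereal" where
  "worst_case_recourse c2 F h G B1 B2 d E x =
     (SUP u\<in>unc_set F h G x. INF y\<in>rec_set B2 d B1 E x u. ereal (c2 \<bullet> y))"

lemma orig_obj_eq_worst_case_recourse: "orig_obj c1 c2 F h G B1 B2 d E x =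
    ereal (c1 \<bullet> x) + worst_case_recourse c2 F h G B1 B2 d E x"
  by (simp add: orig_obj_def worst_case_recourse_def)

lemma ref_feas_iff: "ref_feas I A b c2 F h G B1 B2 d E x \<eta> \<longleftrightarrow>
    x \<in> first_stage_set I A b \<and> worst_case_recourse c2 F h G B1 B2 d E x \<le> ereal \<eta>"
  by (simp add: ref_feas_def worst_case_recourse_def rec_set_def worst_case_lp_value_le_iff)

lemma worst_case_recourse_lower_bound:
  assumes "x \<in> first_stage_set I A b" "u \<in> unc_set F h G x"
    and "det_val I A b c1 c2 F h G B1 B2 d E = ereal D"
  shows "ereal (D - c1 \<bullet> x) \<le> worst_case_recourse c2 F h G B1 B2 d E x"
proof -
  have "ereal (D - c1 \<bullet> x) \<le> (INF y\<in>rec_set B2 d B1 E x u. ereal (c2 \<bullet> y))"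
  proof (rule INF_greatest)
    fix y assume "y \<in> rec_set B2 d B1 E x u"
    with assms(1,2) have "det_val I A b c1 c2 F h G B1 B2 d E \<le> ereal (c1 \<bullet> x + c2 \<bullet> y)"
      unfolding det_val_def by (intro INF_lower2[of "(x, u, y)"]) auto
    with assms(3) show "ereal (D - c1 \<bullet> x) \<le> ereal (c2 \<bullet> y)" by simp
  qed
  also have "\<dots> \<le> worst_case_recourse c2 F h G B1 B2 d E x"
    unfolding worst_case_recourse_def using assms(2) by (rule SUP_upper)
  finally show ?thesis .
qed

theorem theorem2:
  fixes I :: "'x::finite set"
    and A :: "real^'x^'a::finite" and b :: "real^'a"
    and c1 :: "real^'x" and c2 :: "real^'y::finite"
    and F :: "real^'x \<Rightarrow> real^'u::finite^'r::finite" and h :: "real^'r" and G :: "real^'x^'r"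
    and B1 :: "real^'x^'m::finite" and B2 :: "real^'y^'m" and d :: "real^'m"
    and E :: "real^'u^'m"
  assumes A1: "\<forall>x\<in>first_stage_set I A b. unc_set F h G x \<noteq> {}"
    and A2: "\<forall>x\<in>first_stage_set I A b. bounded (unc_set F h G x)"
    and A3: "\<bar>det_val I A b c1 c2 F h G B1 B2 d E\<bar> \<noteq> \<infinity>"
  shows "ref_val I A b c1 c2 F h G B1 B2 d E = orig_val I A b c1 c2 F h G B1 B2 d E \<and>
         (\<forall>x. orig_opt I A b c1 c2 F h G B1 B2 d E x \<longleftrightarrow> ref_opt I A b c1 c2 F h G B1 B2 d E x)"
proof -
  let ?X = "first_stage_set I A b"
  let ?V = "worst_case_recourse c2 F h G B1 B2 d E"
  obtain D where D: "det_val I A b c1 c2 F h G B1 B2 d E = ereal D"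
    using A3 by (cases "det_val I A b c1 c2 F h G B1 B2 d E") auto
  have V_finite: "?V x \<noteq> -\<infinity>" if "x \<in> ?X" for x
    using worst_case_recourse_lower_bound[OF that _ D] A1 that by fastforce
  have orig: "orig_val I A b c1 c2 F h G B1 B2 d E = (INF x\<in>?X. ereal (c1 \<bullet> x) + ?V x)"
    by (simp add: orig_val_def orig_obj_eq_worst_case_recourse)
  have "ref_val I A b c1 c2 F h G B1 B2 d E =
      (INF p\<in>{(x, \<eta>). x \<in> ?X \<and> ?V x \<le> ereal \<eta>}. ereal (c1 \<bullet> fst p + snd p))"
    by (simp add: ref_val_def ref_feas_iff)
  also have "\<dots> = orig_val I A b c1 c2 F h G B1 B2 d E"
    unfolding orig using epigraph_INF_eq[of ?X ?V "\<lambda>x. c1 \<bullet> x"] V_finite by simp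
  finally have val: "ref_val I A b c1 c2 F h G B1 B2 d E = orig_val I A b c1 c2 F h G B1 B2 d E" .
  moreover have
    "orig_opt I A b c1 c2 F h G B1 B2 d E x \<longleftrightarrow> ref_opt I A b c1 c2 F h G B1 B2 d E x" for x
    unfolding orig_opt_def ref_opt_def orig_obj_eq_worst_case_recourse ref_feas_iff val orig
    using epigraph_argmin_iff[of ?X ?V x "\<lambda>x. c1 \<bullet> x"] V_finite by simp
  ultimately show ?thesis by blast
qed

end
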